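(* Let $(X,Y)$ be a pair of uncorrelated real random variables. If $X\in\mathcal{G}(\nu)$ and $|Y|\le\kappa$ almost surely for some $\nu>0$ and $\kappa>0$, then $XY\in\mathcal{G}((9/2)\kappa^2\nu)$.
   Context: A centered random variable $Y$ is sub-Gaussian with variance factor $\tau^2$, written $Y\in\mathcal{G}(\tau^2)$, if $\log\mathbb{E}[\exp(\lambda Y)]\le\lambda^2\tau^2/2$ for all $\lambda\in\mathbb{R}$ (in particular membership in $\mathcal{G}(\cdot)$ requires the variable to be centered). *)

theory Defs
  imports "HOL-Probability.Probability"
begin

definition subgaussian :: "'a measure \<Rightarrow> ('a \<Rightarrow> real) \<Rightarrow> real \<Rightarrow> bool" where
  "subgaussian M Y tau2 \<longleftrightarrow>
     Y \<in> borel_measurable M \<and> integrable M Y \<and> (\<integral>x. Y x \<partial>M) = 0 \<and>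
     (\<forall>l::real. integrable M (\<lambda>x. exp (l * Y x)) \<and>
        ln (\<integral>x. exp (l * Y x) \<partial>M) \<le> l\<^sup>2 * tau2 / 2)"

definition uncorrelated :: "'a measure \<Rightarrow> ('a \<Rightarrow> real) \<Rightarrow> ('a \<Rightarrow> real) \<Rightarrow> bool" where
  "uncorrelated M X Y \<longleftrightarrow>
     integrable M X \<and> integrable M Y \<and> integrable M (\<lambda>x. X x * Y x) \<and>
     (\<integral>x. X x * Y x \<partial>M) = (\<integral>x. X x \<partial>M) * (\<integral>x. Y x \<partial>M)"

end

theory Submission imports Defs begin

text \<open>Write \<open>Z = X Y\<close>; it is centered because \<open>X\<close> is centered and uncorrelated with \<open>Y\<close>.
  Taylor's bound \<open>e\<^sup>z \<le> 1 + z + z\<^sup>2 e\<^bsup>|z|\<^esup>/2\<close> with \<open>|\<lambda> Z| \<le> t |X|\<close>, \<open>t = |\<lambda>| \<kappa>\<close>, reduces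
  \<open>E e\<^bsup>\<lambda> Z\<^esup>\<close> to \<open>1 + t\<^sup>2 E[X\<^sup>2 e\<^bsup>t|X|\<^esup>]/2\<close>. The polynomial factor is absorbed into an exponential,
  \<open>x\<^sup>2 \<le> (2\<nu>/e\<^sup>2) e\<^bsup>a|x|\<^esup>\<close> with \<open>a = \<surd>(2/\<nu>)\<close>, and \<open>e\<^bsup>c|X|\<^esup> \<le> e\<^bsup>cX\<^esup> + e\<^bsup>-cX\<^esup>\<close> brings back the
  sub-Gaussian moment generating function of \<open>X\<close>. What is left is the scalar inequality
  \<open>1 + 2u\<^sup>2 e\<^bsup>u\<^sup>2/2 + \<surd>2 u - 1\<^esup> \<le> e\<^bsup>9u\<^sup>2/4\<^esup>\<close> for \<open>u = t\<surd>\<nu>\<close>.\<close>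

lemma exp_le_taylor2_exp_abs:
  fixes z :: real
  shows "exp z \<le> 1 + z + z\<^sup>2 / 2 * exp \<bar>z\<bar>"
proof -
  obtain t where t: "\<bar>t\<bar> \<le> \<bar>z\<bar>" "exp z = (\<Sum>m<2. z ^ m / fact m) + exp t / fact 2 * z ^ 2"
    using Maclaurin_exp_le[of z 2] by blast
  have "exp z = 1 + z + exp t / 2 * z\<^sup>2"
    using t(2) by (simp add: numeral_2_eq_2)
  also have "\<dots> \<le> 1 + z + exp \<bar>z\<bar> / 2 * z\<^sup>2"
    using t(1) by (intro add_left_mono mult_right_mono) auto
  finally show ?thesis
    by (simp add: field_simps)
qed

lemma sq_le_exp_abs:
  fixes x a :: real
  assumes "a > 0"
  shows "x\<^sup>2 \<le> 4 / (a\<^sup>2 * exp 2) * exp (a * \<bar>x\<bar>)"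
proof -
  define y where "y = a * \<bar>x\<bar> / 2"
  have "y \<le> exp (y - 1)"
    using exp_ge_add_one_self[of "y - 1"] by simp
  then have "y\<^sup>2 \<le> (exp (y - 1))\<^sup>2"
    using assms by (intro power_mono) (auto simp: y_def)
  also have "\<dots> = exp (a * \<bar>x\<bar>) / exp 2"
    by (simp add: y_def power2_eq_square flip: exp_add exp_diff)
  finally have "y\<^sup>2 \<le> exp (a * \<bar>x\<bar>) / exp 2" .
  moreover have "x\<^sup>2 = 4 / a\<^sup>2 * y\<^sup>2"
    using assms by (simp add: y_def power2_eq_square field_simps)
  ultimately show ?thesis
    using assms by (simp add: field_simps)
qed

lemma one_add_mult_exp_half_le_exp:
  fixes w :: real
  assumes "w \<ge> 0"
  shows "1 + w * exp (w / 2) \<le> exp w"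
proof -
  define g where "g w = exp w - 1 - w * exp (w / 2)" for w :: real
  have deriv: "(g has_real_derivative exp (w / 2) * (exp (w / 2) - 1 - w / 2)) (at w)" for w
    unfolding g_def by (auto intro!: derivative_eq_intros simp: field_simps simp flip: exp_add)
  have "g 0 \<le> g w"
  proof (rule DERIV_nonneg_imp_nondecreasing[OF assms])
    fix x :: real
    have "0 \<le> exp (x / 2) - 1 - x / 2"
      using exp_ge_add_one_self[of "x / 2"] by linarith
    then have "0 \<le> exp (x / 2) * (exp (x / 2) - 1 - x / 2)"
      by simp
    then show "\<exists>y. (g has_real_derivative y) (at x) \<and> 0 \<le> y"
      using deriv by blast
  qed
  then show ?thesis
    by (simp add: g_def)
qed

lemma one_add_sq_mult_exp_le_exp:
  fixes u :: real
  assumes "u \<ge> 0"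
  shows "1 + 2 * u\<^sup>2 * exp (u\<^sup>2 / 2 + sqrt 2 * u - 1) \<le> exp (9 * u\<^sup>2 / 4)"
proof -
  have exp_ninth: "exp (1 / 9 :: real) \<le> 9 / 8"
  proof -
    have "8 / 9 \<le> exp (- (1 / 9 :: real))"
      using exp_ge_add_one_self[of "- (1 / 9)"] by simp
    then show ?thesis
      by (simp add: exp_minus field_simps)
  qed
  have "u\<^sup>2 / 2 + sqrt 2 * u - 1 = 9 * u\<^sup>2 / 8 + 1 / 9 - (5 / 8 * (u - 4 / 5 * sqrt 2)\<^sup>2 + 14 / 45)"
    by (simp add: power2_eq_square algebra_simps)
  then have "u\<^sup>2 / 2 + sqrt 2 * u - 1 \<le> 9 * u\<^sup>2 / 8 + 1 / 9"
    using zero_le_power2[of "u - 4 / 5 * sqrt 2"] by linarith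
  then have "exp (u\<^sup>2 / 2 + sqrt 2 * u - 1) \<le> exp (9 * u\<^sup>2 / 8) * exp (1 / 9)"
    by (simp flip: exp_add)
  also have "\<dots> \<le> exp (9 * u\<^sup>2 / 8) * (9 / 8)"
    using exp_ninth by (intro mult_left_mono) auto
  finally have "2 * u\<^sup>2 * exp (u\<^sup>2 / 2 + sqrt 2 * u - 1) \<le> 2 * u\<^sup>2 * (exp (9 * u\<^sup>2 / 8) * (9 / 8))"
    by (rule mult_left_mono) simp
  also have "\<dots> = 9 * u\<^sup>2 / 4 * exp (9 * u\<^sup>2 / 4 / 2)"
    by simp
  finally have "2 * u\<^sup>2 * exp (u\<^sup>2 / 2 + sqrt 2 * u - 1) \<le> 9 * u\<^sup>2 / 4 * exp (9 * u\<^sup>2 / 4 / 2)" .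
  with one_add_mult_exp_half_le_exp[of "9 * u\<^sup>2 / 4"] show ?thesis
    by simp
qed

lemma one_add_scaled_exp_le_exp:
  fixes t \<nu> :: real
  assumes "t \<ge> 0" "\<nu> > 0"
  shows "1 + 2 * (t\<^sup>2 * \<nu> / exp 2) * exp ((t + sqrt (2 / \<nu>))\<^sup>2 * \<nu> / 2) \<le> exp (9 * t\<^sup>2 * \<nu> / 4)"
proof -
  define u where "u = t * sqrt \<nu>"
  have "sqrt (2 / \<nu>) * sqrt \<nu> = sqrt 2"
    using assms by (simp add: real_sqrt_divide)
  then have "(t + sqrt (2 / \<nu>)) * sqrt \<nu> = u + sqrt 2"
    by (simp add: u_def distrib_right)
  moreover have "(t + sqrt (2 / \<nu>))\<^sup>2 * \<nu> = ((t + sqrt (2 / \<nu>)) * sqrt \<nu>)\<^sup>2"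
    using assms by (simp add: power_mult_distrib)
  ultimately have "(t + sqrt (2 / \<nu>))\<^sup>2 * \<nu> / 2 = (u\<^sup>2 / 2 + sqrt 2 * u - 1) + 2"
    by (simp add: power2_eq_square algebra_simps)
  then have "exp ((t + sqrt (2 / \<nu>))\<^sup>2 * \<nu> / 2) / exp 2 = exp (u\<^sup>2 / 2 + sqrt 2 * u - 1)"
    by (simp only: exp_add) simp
  moreover have "t\<^sup>2 * \<nu> = u\<^sup>2"
    using assms by (simp add: u_def power_mult_distrib)
  ultimately have "2 * (t\<^sup>2 * \<nu> / exp 2) * exp ((t + sqrt (2 / \<nu>))\<^sup>2 * \<nu> / 2)
      = 2 * u\<^sup>2 * exp (u\<^sup>2 / 2 + sqrt 2 * u - 1)"
    by (metis times_divide_eq_left times_divide_eq_right mult.assoc)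
  with \<open>t\<^sup>2 * \<nu> = u\<^sup>2\<close> show ?thesis
    using one_add_sq_mult_exp_le_exp[of u] assms by (simp add: u_def mult.assoc)
qed

lemma exp_mult_bounded_le:
  fixes l x y \<kappa> \<nu> :: real
  assumes "\<nu> > 0" "\<bar>y\<bar> \<le> \<kappa>"
  defines "c \<equiv> \<bar>l\<bar> * \<kappa> + sqrt (2 / \<nu>)"
  shows "exp (l * (x * y)) \<le> 1 + l * (x * y) + (\<bar>l\<bar> * \<kappa>)\<^sup>2 * \<nu> / exp 2 * (exp (c * x) + exp (- c * x))"
proof -
  define t where "t = \<bar>l\<bar> * \<kappa>"
  have abs_le: "\<bar>l * (x * y)\<bar> \<le> t * \<bar>x\<bar>"
    using mult_left_mono[OF assms(2), of "\<bar>l\<bar> * \<bar>x\<bar>"] by (simp add: t_def abs_mult algebra_simps)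
  have "(l * (x * y))\<^sup>2 = \<bar>l * (x * y)\<bar>\<^sup>2"
    by simp
  also have "\<dots> \<le> t\<^sup>2 * x\<^sup>2"
    using abs_le by (metis abs_ge_zero power_mono power2_abs power_mult_distrib)
  finally have sq_le: "(l * (x * y))\<^sup>2 \<le> t\<^sup>2 * x\<^sup>2" .
  have sqrt_sq: "(sqrt (2 / \<nu>))\<^sup>2 = 2 / \<nu>"
    using assms(1) by simp
  have "x\<^sup>2 * exp (t * \<bar>x\<bar>) \<le> 4 / ((sqrt (2 / \<nu>))\<^sup>2 * exp 2) * exp (sqrt (2 / \<nu>) * \<bar>x\<bar>) * exp (t * \<bar>x\<bar>)"
    using sq_le_exp_abs[of "sqrt (2 / \<nu>)" x] assms(1) by (intro mult_right_mono) auto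
  also have "\<dots> = 2 * \<nu> / exp 2 * exp (c * \<bar>x\<bar>)"
    using assms(1) by (simp add: sqrt_sq c_def t_def distrib_right exp_add field_simps)
  also have "\<dots> \<le> 2 * \<nu> / exp 2 * (exp (c * x) + exp (- c * x))"
    using assms(1) by (intro mult_left_mono) (cases "x \<ge> 0", auto)
  finally have absorb: "x\<^sup>2 * exp (t * \<bar>x\<bar>) \<le> 2 * \<nu> / exp 2 * (exp (c * x) + exp (- c * x))" .
  have "exp (l * (x * y)) \<le> 1 + l * (x * y) + (l * (x * y))\<^sup>2 / 2 * exp \<bar>l * (x * y)\<bar>"
    by (rule exp_le_taylor2_exp_abs)
  also have "(l * (x * y))\<^sup>2 / 2 * exp \<bar>l * (x * y)\<bar> \<le> t\<^sup>2 / 2 * (x\<^sup>2 * exp (t * \<bar>x\<bar>))"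
    using mult_mono[OF sq_le exp_mono[OF abs_le]] by simp
  also have "\<dots> \<le> t\<^sup>2 / 2 * (2 * \<nu> / exp 2 * (exp (c * x) + exp (- c * x)))"
    using absorb by (intro mult_left_mono) auto
  finally show ?thesis
    by (simp add: t_def)
qed

context prob_space
begin

lemma one_le_integral_exp_centered:
  fixes Z :: "'a \<Rightarrow> real"
  assumes "integrable M Z" "(\<integral>x. Z x \<partial>M) = 0" "integrable M (\<lambda>x. exp (Z x))"
  shows "1 \<le> (\<integral>x. exp (Z x) \<partial>M)"
proof -
  have "(\<integral>x. 1 + Z x \<partial>M) \<le> (\<integral>x. exp (Z x) \<partial>M)"
    using assms by (intro integral_mono) auto
  moreover have "(\<integral>x. 1 + Z x \<partial>M) = 1"
    using assms by (simp add: prob_space)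
  ultimately show ?thesis
    by simp
qed

lemma subgaussian_integral_exp_le:
  assumes "subgaussian M X \<nu>"
  shows "(\<integral>x. exp (c * X x) \<partial>M) \<le> exp (c\<^sup>2 * \<nu> / 2)"
proof -
  have "1 \<le> (\<integral>x. exp (c * X x) \<partial>M)"
    using assms by (intro one_le_integral_exp_centered) (auto simp: subgaussian_def)
  then have "(\<integral>x. exp (c * X x) \<partial>M) = exp (ln (\<integral>x. exp (c * X x) \<partial>M))"
    by simp
  also have "\<dots> \<le> exp (c\<^sup>2 * \<nu> / 2)"
    using assms by (simp add: subgaussian_def)
  finally show ?thesis .
qed

lemma subgaussianI:
  assumes "Z \<in> borel_measurable M" "integrable M Z" "(\<integral>x. Z x \<partial>M) = 0"
    and "\<And>l. integrable M (\<lambda>x. exp (l * Z x))"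
    and "\<And>l. (\<integral>x. exp (l * Z x) \<partial>M) \<le> exp (l\<^sup>2 * \<tau> / 2)"
  shows "subgaussian M Z \<tau>"
  unfolding subgaussian_def
proof (intro conjI allI assms(1-4))
  fix l
  have "1 \<le> (\<integral>x. exp (l * Z x) \<partial>M)"
    using assms by (intro one_le_integral_exp_centered) auto
  then show "ln (\<integral>x. exp (l * Z x) \<partial>M) \<le> l\<^sup>2 * \<tau> / 2"
    using ln_mono[OF assms(5)[of l]] by simp
qed

lemma integral_exp_mult_bounded_le:
  fixes l \<kappa> \<nu> :: real
  assumes "subgaussian M X \<nu>" "\<nu> > 0"
    and "Y \<in> borel_measurable M" "AE x in M. \<bar>Y x\<bar> \<le> \<kappa>"
    and "integrable M (\<lambda>x. X x * Y x)" "(\<integral>x. X x * Y x \<partial>M) = 0"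
  defines "c \<equiv> \<bar>l\<bar> * \<kappa> + sqrt (2 / \<nu>)"
  shows "integrable M (\<lambda>x. exp (l * (X x * Y x)))"
    and "(\<integral>x. exp (l * (X x * Y x)) \<partial>M) \<le> 1 + 2 * ((\<bar>l\<bar> * \<kappa>)\<^sup>2 * \<nu> / exp 2) * exp (c\<^sup>2 * \<nu> / 2)"
proof -
  define K where "K = (\<bar>l\<bar> * \<kappa>)\<^sup>2 * \<nu> / exp 2"
  define B where "B x = 1 + l * (X x * Y x) + K * (exp (c * X x) + exp (- c * X x))" for x
  have X_meas: "X \<in> borel_measurable M" and int_exp: "\<And>c. integrable M (\<lambda>x. exp (c * X x))"
    using assms(1) by (auto simp: subgaussian_def)
  have int_B: "integrable M B"
    unfolding B_def using int_exp[of c] int_exp[of "- c"] assms(5) by (intro Bochner_Integration.integrable_add integrable_mult_right) auto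
  have bound: "AE x in M. exp (l * (X x * Y x)) \<le> B x"
    using assms(4) unfolding B_def K_def c_def by eventually_elim (rule exp_mult_bounded_le[OF assms(2)])
  show int_exp_Z: "integrable M (\<lambda>x. exp (l * (X x * Y x)))"
    using bound X_meas assms(3)
    by (intro Bochner_Integration.integrable_bound[OF int_B]) (auto elim!: eventually_mono)
  have "(\<integral>x. exp (l * (X x * Y x)) \<partial>M) \<le> (\<integral>x. B x \<partial>M)"
    using bound int_exp_Z int_B by (intro integral_mono_AE)
  also have "\<dots> = 1 + K * ((\<integral>x. exp (c * X x) \<partial>M) + (\<integral>x. exp (- c * X x) \<partial>M))"
    using int_exp[of c] int_exp[of "- c"] assms(5,6) by (simp add: B_def prob_space)
  also have "\<dots> \<le> 1 + K * (2 * exp (c\<^sup>2 * \<nu> / 2))"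
    using subgaussian_integral_exp_le[OF assms(1), of c] subgaussian_integral_exp_le[OF assms(1), of "- c"]
      assms(2)
    by (intro add_left_mono mult_left_mono) (auto simp: K_def)
  finally show "(\<integral>x. exp (l * (X x * Y x)) \<partial>M) \<le> 1 + 2 * ((\<bar>l\<bar> * \<kappa>)\<^sup>2 * \<nu> / exp 2) * exp (c\<^sup>2 * \<nu> / 2)"
    by (simp add: K_def ac_simps)
qed

end

theorem lemma4:
  fixes M :: "'a measure" and X Y :: "'a \<Rightarrow> real" and \<nu> \<kappa> :: real
  assumes "prob_space M"
    and "X \<in> borel_measurable M" and "Y \<in> borel_measurable M"
    and "uncorrelated M X Y"
    and "\<nu> > 0" and "\<kappa> > 0"
    and "subgaussian M X \<nu>"
    and "AE x in M. \<bar>Y x\<bar> \<le> \<kappa>"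
  shows "subgaussian M (\<lambda>x. X x * Y x) ((9/2) * \<kappa>\<^sup>2 * \<nu>)"
proof -
  interpret prob_space M by (rule assms(1))
  have int_XY: "integrable M (\<lambda>x. X x * Y x)"
    using assms(4) by (simp add: uncorrelated_def)
  have centered: "(\<integral>x. X x * Y x \<partial>M) = 0"
    using assms(4,7) by (simp add: uncorrelated_def subgaussian_def)
  note mgf = integral_exp_mult_bounded_le[OF assms(7,5,3,8) int_XY centered]
  show ?thesis
  proof (rule subgaussianI[OF _ int_XY centered mgf(1)])
    show "(\<lambda>x. X x * Y x) \<in> borel_measurable M"
      using assms(2,3) by measurable
    fix l :: real
    have "(\<integral>x. exp (l * (X x * Y x)) \<partial>M) \<le> exp (9 * (\<bar>l\<bar> * \<kappa>)\<^sup>2 * \<nu> / 4)"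
      using mgf(2)[of l] one_add_scaled_exp_le_exp[of "\<bar>l\<bar> * \<kappa>" \<nu>] assms(5,6) by simp
    also have "\<dots> = exp (l\<^sup>2 * ((9/2) * \<kappa>\<^sup>2 * \<nu>) / 2)"
      by (simp add: power_mult_distrib)
    finally show "(\<integral>x. exp (l * (X x * Y x)) \<partial>M) \<le> exp (l\<^sup>2 * ((9/2) * \<kappa>\<^sup>2 * \<nu>) / 2)" .
  qed
qed

end
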